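(* Let $m,n\ge 1$ and let $A\in\mathbb{R}^{m\times n}$ with rows $a_1,\dots,a_m$ maximize $\beta(A)$ among all $m\times n$ real matrices whose rows all have Euclidean norm $1$. For $i=1,\dots,m$ let $$W_i=\{x\in\{-1,1\}^n : \|Ax\|_\infty = a_i^\top x\}.$$ Then for every $i$ with $\sum_{x\in W_i}x\neq 0$, $$a_i=\frac{\sum_{x\in W_i}x}{\left\|\sum_{x\in W_i}x\right\|_2}.$$
   Context: For $A\in\mathbb{R}^{m\times n}$, $\beta(A)=\frac{1}{2^n}\sum_{x\in\{-1,1\}^n}\|Ax\|_\infty$. The maximum exists by compactness. *)

theory Defs
  imports "HOL-Analysis.Analysis"
begin

definition signvecs :: "(real ^ 'n) set" where
  "signvecs = {x. \<forall>j. x $ j = 1 \<or> x $ j = -1}"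

definition linf_norm :: "real ^ 'm \<Rightarrow> real" where
  "linf_norm y = Max (range (\<lambda>i. \<bar>y $ i\<bar>))"

definition beta :: "real ^ 'n ^ 'm \<Rightarrow> real" where
  "beta A = (\<Sum>x\<in>(signvecs :: (real ^ 'n) set). linf_norm (A *v x)) / 2 ^ CARD('n)"

definition Wset :: "real ^ 'n ^ 'm \<Rightarrow> 'm \<Rightarrow> (real ^ 'n) set" where
  "Wset A i = {x \<in> signvecs. linf_norm (A *v x) = (A $ i) \<bullet> x}"

end

theory Submission
  imports Defs
begin

text \<open>Replace the row \<open>a\<^sub>i\<close> of a maximiser \<open>A\<close> by an arbitrary \<open>v\<close>. For a sign vector \<open>x\<close> whose
  sup norm is attained by \<open>a\<^sub>i \<bullet> x\<close> the sup norm changes by at least \<open>(v - a\<^sub>i) \<bullet> x\<close>; for \<open>x\<close>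
  with sup norm attained by \<open>-a\<^sub>i \<bullet> x\<close> it changes by at least \<open>-(v - a\<^sub>i) \<bullet> x\<close>; otherwise it does
  not decrease. Summing over the sign vectors, which are symmetric under \<open>x \<mapsto> -x\<close>, the total
  gain is at least \<open>2 (v - a\<^sub>i) \<bullet> s\<close> with \<open>s = \<Sum>W\<^sub>i\<close>. Maximality of \<open>A\<close> for \<open>v = s / \<parallel>s\<parallel>\<close> gives
  \<open>\<parallel>s\<parallel> \<le> a\<^sub>i \<bullet> s\<close>, and the equality case of Cauchy-Schwarz forces \<open>a\<^sub>i = s / \<parallel>s\<parallel>\<close>.\<close>

lemma linf_norm_ge: "\<bar>y $ k\<bar> \<le> linf_norm y"
  unfolding linf_norm_def by (rule Max_ge) auto

lemma linf_norm_attained: "\<exists>k. linf_norm y = \<bar>y $ k\<bar>"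
proof -
  have "linf_norm y \<in> range (\<lambda>k. \<bar>y $ k\<bar>)"
    unfolding linf_norm_def by (rule Max_in) auto
  then show ?thesis by auto
qed

lemma linf_norm_uminus: "linf_norm (- y) = linf_norm y"
  unfolding linf_norm_def by simp

lemma signvecs_uminus: "x \<in> signvecs \<Longrightarrow> - x \<in> signvecs"
  unfolding signvecs_def by auto

lemma finite_signvecs: "finite (signvecs :: (real ^ 'n) set)"
proof -
  have "signvecs \<subseteq> (\<lambda>T. \<chi> j. if j \<in> T then 1 else -1) ` (UNIV :: 'n set set)"
  proof
    fix x :: "real ^ 'n"
    assume "x \<in> signvecs"
    then have "x = (\<chi> j. if j \<in> {j. x $ j = 1} then 1 else -1)"
      unfolding signvecs_def by (auto simp: vec_eq_iff)
    then show "x \<in> (\<lambda>T. \<chi> j. if j \<in> T then 1 else -1) ` UNIV" by blast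
  qed
  then show ?thesis by (rule finite_subset) simp
qed

lemma sum_signvecs_reflect:
  "(\<Sum>x\<in>(signvecs :: (real ^ 'n) set). f (- x)) = (\<Sum>x\<in>signvecs. f x)"
proof -
  have "bij_betw uminus (signvecs :: (real ^ 'n) set) signvecs"
    by (rule bij_betwI[where g = uminus]) (auto simp: signvecs_uminus)
  then show ?thesis by (simp add: sum.reindex_bij_betw)
qed

definition row_update :: "'a ^ 'n ^ 'm \<Rightarrow> 'm \<Rightarrow> 'a ^ 'n \<Rightarrow> 'a ^ 'n ^ 'm" where
  "row_update A i v = (\<chi> k. if k = i then v else A $ k)"

lemma row_update_mult_component:
  "(row_update A i v *v x) $ k = (if k = i then v \<bullet> x else (A *v x) $ k)"
  unfolding row_update_def by (simp add: matrix_vector_mul_component)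

lemma linf_norm_row_update_ge:
  fixes A :: "real ^ 'n ^ 'm" and i :: 'm and v x :: "real ^ 'n"
  defines "d \<equiv> (v - A $ i) \<bullet> x"
  shows "linf_norm (A *v x)
           + (if linf_norm (A *v x) = A $ i \<bullet> x then d else 0)
           - (if linf_norm (A *v x) = - (A $ i \<bullet> x) then d else 0)
         \<le> linf_norm (row_update A i v *v x)"
proof -
  let ?L = "linf_norm (A *v x)" and ?p = "A $ i \<bullet> x"
  have row_i: "\<bar>v \<bullet> x\<bar> \<le> linf_norm (row_update A i v *v x)"
    using linf_norm_ge[of "row_update A i v *v x" i] by (simp add: row_update_mult_component)
  have d: "d = v \<bullet> x - ?p"
    unfolding d_def by (simp add: inner_diff_left)
  consider "?L = ?p" | "?L = - ?p" | "?L \<noteq> ?p" "?L \<noteq> - ?p" by blast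
  then show ?thesis
  proof cases
    case 1
    then show ?thesis using row_i d by auto
  next
    case 2
    then show ?thesis using row_i d by auto
  next
    case 3
    obtain k where k: "?L = \<bar>(A *v x) $ k\<bar>" using linf_norm_attained by blast
    have "k \<noteq> i"
      using k 3 by (auto simp: matrix_vector_mul_component abs_if split: if_splits)
    then have "?L \<le> linf_norm (row_update A i v *v x)"
      using k linf_norm_ge[of "row_update A i v *v x" k] by (simp add: row_update_mult_component)
    then show ?thesis using 3 by simp
  qed
qed

lemma sum_linf_norm_row_update_ge:
  fixes A :: "real ^ 'n ^ 'm"
  shows "(\<Sum>x\<in>signvecs. linf_norm (A *v x)) + 2 * ((v - A $ i) \<bullet> (\<Sum>x\<in>Wset A i. x))
         \<le> (\<Sum>x\<in>signvecs. linf_norm (row_update A i v *v x))"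
proof -
  let ?S = "signvecs :: (real ^ 'n) set"
  define g where "g x = (if linf_norm (A *v x) = A $ i \<bullet> x then (v - A $ i) \<bullet> x else 0)" for x
  have sum_g: "(\<Sum>x\<in>?S. g x) = (v - A $ i) \<bullet> (\<Sum>x\<in>Wset A i. x)"
    unfolding Wset_def g_def inner_sum_right by (rule sum.inter_filter[OF finite_signvecs, symmetric])
  have g_reflect: "g (- x) = - (if linf_norm (A *v x) = - (A $ i \<bullet> x) then (v - A $ i) \<bullet> x else 0)"
    for x
    by (simp add: g_def linf_norm_uminus linear_neg[OF matrix_vector_mul_linear])
  have "(\<Sum>x\<in>?S. linf_norm (A *v x)) + 2 * (\<Sum>x\<in>?S. g x)
        = (\<Sum>x\<in>?S. linf_norm (A *v x) + g x + g (- x))"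
    by (simp add: sum.distrib sum_signvecs_reflect[of g])
  also have "\<dots> \<le> (\<Sum>x\<in>?S. linf_norm (row_update A i v *v x))"
  proof (rule sum_mono)
    fix x
    show "linf_norm (A *v x) + g x + g (- x) \<le> linf_norm (row_update A i v *v x)"
      using linf_norm_row_update_ge[where A = A and i = i and v = v and x = x]
      unfolding g_reflect by (simp add: g_def)
  qed
  finally show ?thesis by (simp add: sum_g)
qed

lemma unit_eq_normalize_if_norm_le_inner:
  fixes a s :: "'a :: real_inner"
  assumes "norm a = 1" and "s \<noteq> 0" and "norm s \<le> a \<bullet> s"
  shows "a = s /\<^sub>R norm s"
proof -
  have "a \<bullet> s = norm a * norm s"
    using assms Cauchy_Schwarz_ineq2[of a s] by simp
  then have "s = norm s *\<^sub>R a"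
    using norm_cauchy_schwarz_eq[of a s] assms(1) by simp
  then have "s /\<^sub>R norm s = (norm s *\<^sub>R a) /\<^sub>R norm s"
    by (rule arg_cong)
  then show ?thesis using assms(2) by simp
qed

theorem theorem1:
  fixes A :: "real ^ 'n ^ 'm" and i :: 'm
  assumes rows: "\<forall>k. norm (A $ k) = 1"
    and maxim: "\<forall>B :: real ^ 'n ^ 'm. (\<forall>k. norm (B $ k) = 1) \<longrightarrow> beta B \<le> beta A"
    and nz: "(\<Sum>x\<in>Wset A i. x) \<noteq> 0"
  shows "A $ i = (\<Sum>x\<in>Wset A i. x) /\<^sub>R norm (\<Sum>x\<in>Wset A i. x)"
proof -
  define s where "s = (\<Sum>x\<in>Wset A i. x)"
  define u where "u = s /\<^sub>R norm s"
  have "norm u = 1" using nz unfolding u_def s_def by simp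
  then have "beta (row_update A i u) \<le> beta A"
    using maxim rows unfolding row_update_def by simp
  then have "(\<Sum>x\<in>signvecs. linf_norm (row_update A i u *v x))
             \<le> (\<Sum>x\<in>(signvecs :: (real ^ 'n) set). linf_norm (A *v x))"
    unfolding beta_def by (simp add: divide_le_cancel)
  then have "(u - A $ i) \<bullet> s \<le> 0"
    using sum_linf_norm_row_update_ge[where A = A and i = i and v = u] unfolding s_def by simp
  moreover have "u \<bullet> s = norm s"
    using nz unfolding u_def s_def by (simp add: dot_square_norm power2_eq_square)
  ultimately have "norm s \<le> A $ i \<bullet> s"
    by (simp add: inner_diff_left)
  then show ?thesis
    using unit_eq_normalize_if_norm_le_inner rows nz unfolding s_def by blast
qed

end
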